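(* For every real rational function $R\not\equiv0$, $$\operatorname{Ind}_{\mathbb{P}\mathbb{R}}\Big(-\frac1R\Big)=\operatorname{Ind}_{\mathbb{P}\mathbb{R}}(R).$$
   Context: For a real rational function $R$ and a real pole $\omega_0$ of $R$ of odd order, $\operatorname{Ind}_{\omega_0}(R)=+1$ if $R(\omega_0-0)<0<R(\omega_0+0)$ and $-1$ if $R(\omega_0-0)>0>R(\omega_0+0)$; $\operatorname{Ind}_{-\infty}^{+\infty}(R)$ is the sum of these over all real poles of $R$ of odd order. Writing $R=f_1/f_0$, $R$ has a pole at $\infty$ of order $\deg f_1-\deg f_0$ when this is positive; if this order is odd, $\operatorname{Ind}_\infty(R)=+1$ if $R(+\infty)<0<R(-\infty)$ and $-1$ if $R(+\infty)>0>R(-\infty)$; otherwise $\operatorname{Ind}_\infty(R)=0$. Then $\operatorname{Ind}_{\mathbb{P}\mathbb{R}}(R)=\operatorname{Ind}_{-\infty}^{+\infty}(R)+\operatorname{Ind}_\infty(R)$. *)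

theory Defs
  imports "HOL-Computational_Algebra.Polynomial"
begin

text \<open>A real rational function R is represented by a pair of real polynomials
  (f1, f0) with f0 \<noteq> 0, R = f1/f0.  All notions below depend only on R.\<close>

definition ratfun :: "real poly \<Rightarrow> real poly \<Rightarrow> real \<Rightarrow> real" where
  "ratfun f1 f0 x = poly f1 x / poly f0 x"

definition pole_order :: "real poly \<Rightarrow> real poly \<Rightarrow> real \<Rightarrow> int" where
  "pole_order f1 f0 w = int (order w f0) - int (order w f1)"

definition jump_at :: "real poly \<Rightarrow> real poly \<Rightarrow> real \<Rightarrow> int" where
  "jump_at f1 f0 w =
     (if pole_order f1 f0 w > 0 \<and> odd (pole_order f1 f0 w) then
        (if (\<forall>\<^sub>F x in at_left w. ratfun f1 f0 x < 0) \<and> (\<forall>\<^sub>F x in at_right w. ratfun f1 f0 x > 0) then 1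
         else if (\<forall>\<^sub>F x in at_left w. ratfun f1 f0 x > 0) \<and> (\<forall>\<^sub>F x in at_right w. ratfun f1 f0 x < 0) then -1
         else 0)
      else 0)"

text \<open>Ind_{-inf}^{+inf}: sum over the real poles of odd order (all poles are roots of f0).\<close>
definition ind_real :: "real poly \<Rightarrow> real poly \<Rightarrow> int" where
  "ind_real f1 f0 = (\<Sum>w\<in>{w. poly f0 w = 0}. jump_at f1 f0 w)"

definition ind_inf :: "real poly \<Rightarrow> real poly \<Rightarrow> int" where
  "ind_inf f1 f0 =
     (let k = int (degree f1) - int (degree f0) in
      if k > 0 \<and> odd k then
        (if (\<forall>\<^sub>F x in at_top. ratfun f1 f0 x < 0) \<and> (\<forall>\<^sub>F x in at_bot. ratfun f1 f0 x > 0) then 1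
         else if (\<forall>\<^sub>F x in at_top. ratfun f1 f0 x > 0) \<and> (\<forall>\<^sub>F x in at_bot. ratfun f1 f0 x < 0) then -1
         else 0)
      else 0)"

definition ind_PR :: "real poly \<Rightarrow> real poly \<Rightarrow> int" where
  "ind_PR f1 f0 = ind_real f1 f0 + ind_inf f1 f0"

end

(*
  Write p = f1 * f0.  Pointwise, R = f1 / f0 has the sign of p and -1/R the opposite sign,
  while the pole orders of R and -1/R at a real point (and at infinity) are negatives of each
  other.  So at a point of odd order exactly one of the two functions has a pole, and the
  difference of their local indices is half the jump of the sign of p across the point; at a
  point of even order p does not change sign and both indices vanish.  The same holds at
  infinity, where the relevant jump is the one from +infinity back to -infinity.  Summed over
  the real roots, the sign jumps of p telescope to sgn p(+infinity) - sgn p(-infinity), which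
  cancels the contribution of infinity.
*)

theory Submission
  imports Defs
begin

definition sgn_right :: "real poly \<Rightarrow> real \<Rightarrow> real" where
  "sgn_right p w = sgn (poly (p div [:-w, 1:] ^ order w p) w)"

definition sgn_left :: "real poly \<Rightarrow> real \<Rightarrow> real" where
  "sgn_left p w = (-1) ^ order w p * sgn_right p w"

lemma sgn_right_uminus: "sgn_right (- p) w = - sgn_right p w"
  by (simp add: sgn_right_def sgn_minus)

lemma sgn_left_uminus: "sgn_left (- p) w = - sgn_left p w"
  by (simp add: sgn_left_def sgn_right_uminus)

lemma poly_order_factorization:
  fixes p :: "real poly"
  assumes "p \<noteq> 0"
  obtains q where "\<And>x. poly p x = (x - w) ^ order w p * poly q x"
    and "poly q w \<noteq> 0" and "sgn_right p w = sgn (poly q w)"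
proof -
  define m where "m = order w p"
  obtain q where q: "p = [:-w, 1:] ^ m * q" and "\<not> [:-w, 1:] dvd q"
    using order_decomp[OF assms] unfolding m_def by blast
  have "poly q w \<noteq> 0"
    using \<open>\<not> [:-w, 1:] dvd q\<close> by (simp add: poly_eq_0_iff_dvd)
  moreover have "poly p x = (x - w) ^ m * poly q x" for x
    by (subst q) (simp add: poly_power)
  moreover have "sgn_right p w = sgn (poly q w)"
    unfolding sgn_right_def m_def[symmetric] by (subst q) simp
  ultimately show thesis
    using that unfolding m_def by blast
qed

lemma eventually_sgn_poly_nonroot:
  fixes q :: "real poly"
  assumes "poly q w \<noteq> 0"
  shows "\<forall>\<^sub>F x in at w. sgn (poly q x) = sgn (poly q w)"
proof -
  have lim: "(poly q \<longlongrightarrow> poly q w) (at w)"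
    by (intro tendsto_intros)
  consider "poly q w > 0" | "poly q w < 0"
    using assms by linarith
  then show ?thesis
  proof cases
    case 1
    from order_tendstoD(1)[OF lim 1] show ?thesis
      by eventually_elim (use 1 in auto)
  next
    case 2
    from order_tendstoD(2)[OF lim 2] show ?thesis
      by eventually_elim (use 2 in auto)
  qed
qed

lemma eventually_sgn_poly_at_right:
  fixes p :: "real poly"
  assumes "p \<noteq> 0"
  shows "\<forall>\<^sub>F x in at_right w. sgn (poly p x) = sgn_right p w"
proof -
  obtain q where p: "\<And>x. poly p x = (x - w) ^ order w p * poly q x"
    and "poly q w \<noteq> 0" and s: "sgn_right p w = sgn (poly q w)"
    using poly_order_factorization[OF assms, of w] by blast
  then have "\<forall>\<^sub>F x in at_right w. sgn (poly q x) = sgn (poly q w)"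
    using eventually_sgn_poly_nonroot eventually_at_split by blast
  with eventually_at_right_less[of w] show ?thesis
    by eventually_elim (simp add: p s sgn_mult power_sgn)
qed

lemma eventually_sgn_poly_at_left:
  fixes p :: "real poly"
  assumes "p \<noteq> 0"
  shows "\<forall>\<^sub>F x in at_left w. sgn (poly p x) = sgn_left p w"
proof -
  obtain q where p: "\<And>x. poly p x = (x - w) ^ order w p * poly q x"
    and "poly q w \<noteq> 0" and s: "sgn_right p w = sgn (poly q w)"
    using poly_order_factorization[OF assms, of w] by blast
  then have "\<forall>\<^sub>F x in at_left w. sgn (poly q x) = sgn (poly q w)"
    using eventually_sgn_poly_nonroot eventually_at_split by blast
  moreover have "\<forall>\<^sub>F x in at_left w. x < w"
    using lt_ex by (auto simp: eventually_at_left_field)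
  ultimately show ?thesis
    by eventually_elim (simp add: p s sgn_mult power_sgn sgn_left_def)
qed

lemma sgn_right_cases:
  fixes p :: "real poly"
  assumes "p \<noteq> 0"
  shows "sgn_right p w = 1 \<or> sgn_right p w = -1"
  using poly_order_factorization[OF assms, of w] by (metis sgn_if)

lemma sgn_left_cases:
  fixes p :: "real poly"
  assumes "p \<noteq> 0"
  shows "sgn_left p w = 1 \<or> sgn_left p w = -1"
  using sgn_right_cases[OF assms, of w] by (auto simp: sgn_left_def minus_one_power_iff)

lemma sgn_poly_eq_if_no_roots:
  fixes p :: "real poly"
  assumes "u \<le> v" and "\<And>x. u \<le> x \<Longrightarrow> x \<le> v \<Longrightarrow> poly p x \<noteq> 0"
  shows "sgn (poly p u) = sgn (poly p v)"
proof (rule ccontr)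
  assume ne: "sgn (poly p u) \<noteq> sgn (poly p v)"
  then have "u < v"
    using assms(1) by (cases "u = v") auto
  have "poly p u \<noteq> 0" "poly p v \<noteq> 0"
    using assms by auto
  with ne have "poly p u * poly p v < 0"
    by (auto simp: sgn_if mult_less_0_iff split: if_splits)
  with \<open>u < v\<close>
  obtain x where "u < x" "x < v" "poly p x = 0"
    using poly_IVT by blast
  with assms(2) show False
    by auto
qed

lemma eventually_sgn_eq_iff:
  fixes g :: "'a \<Rightarrow> real"
  assumes "F \<noteq> bot" and "\<forall>\<^sub>F x in F. sgn (g x) = s"
  shows "(\<forall>\<^sub>F x in F. sgn (g x) = t) \<longleftrightarrow> s = t"
  using assms by (metis tendsto_eventually tendsto_unique)

lemma sgn_left_eq_sgn_poly:
  fixes p :: "real poly"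
  assumes "a < w" and "\<And>x. a \<le> x \<Longrightarrow> x < w \<Longrightarrow> poly p x \<noteq> 0"
  shows "sgn_left p w = sgn (poly p a)"
proof -
  have "p \<noteq> 0"
    using assms(1) assms(2)[of a] by auto
  have "\<forall>\<^sub>F x in at_left w. sgn (poly p x) = sgn (poly p a)"
    using eventually_at_left_real[OF assms(1)]
    by eventually_elim (use assms(2) in \<open>fastforce intro!: sgn_poly_eq_if_no_roots[symmetric]\<close>)
  then show ?thesis
    using eventually_sgn_eq_iff[OF trivial_limit_at_left_real eventually_sgn_poly_at_left[OF \<open>p \<noteq> 0\<close>]]
    by simp
qed

lemma sgn_right_eq_sgn_poly:
  fixes p :: "real poly"
  assumes "w < c" and "\<And>x. w < x \<Longrightarrow> x \<le> c \<Longrightarrow> poly p x \<noteq> 0"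
  shows "sgn_right p w = sgn (poly p c)"
proof -
  have "p \<noteq> 0"
    using assms(1) assms(2)[of c] by auto
  have "\<forall>\<^sub>F x in at_right w. sgn (poly p x) = sgn (poly p c)"
    using eventually_at_right_real[OF assms(1)]
    by eventually_elim (use assms(2) in \<open>fastforce intro!: sgn_poly_eq_if_no_roots\<close>)
  then show ?thesis
    using eventually_sgn_eq_iff[OF trivial_limit_at_right_real eventually_sgn_poly_at_right[OF \<open>p \<noteq> 0\<close>]]
    by simp
qed

lemma poly_no_roots_right:
  fixes p :: "real poly"
  assumes "p \<noteq> 0" and "w < b"
  obtains c where "w < c" "c < b" "\<And>x. w < x \<Longrightarrow> x \<le> c \<Longrightarrow> poly p x \<noteq> 0"
proof -
  have "\<forall>\<^sub>F x in at_right w. poly p x \<noteq> 0"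
    using eventually_sgn_poly_at_right[OF assms(1)]
    by eventually_elim (use sgn_right_cases[OF assms(1), of w] in auto)
  then obtain d where "d > w" and d: "\<And>x. w < x \<Longrightarrow> x < d \<Longrightarrow> poly p x \<noteq> 0"
    by (auto simp: eventually_at_right_field)
  show thesis
    by (rule that[of "(w + min d b) / 2"]) (use \<open>d > w\<close> assms(2) d in auto)
qed

lemma sum_sign_jumps_between:
  fixes p :: "real poly"
  shows "a < b \<Longrightarrow> poly p a \<noteq> 0 \<Longrightarrow> poly p b \<noteq> 0 \<Longrightarrow>
    (\<Sum>w\<in>{w. poly p w = 0 \<and> a < w \<and> w < b}. sgn_right p w - sgn_left p w)
      = sgn (poly p b) - sgn (poly p a)"
proof (induction "card {w. poly p w = 0 \<and> a < w \<and> w < b}" arbitrary: a rule: less_induct)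
  case (less a)
  let ?S = "{w. poly p w = 0 \<and> a < w \<and> w < b}"
  have "p \<noteq> 0"
    using less.prems by auto
  have fin: "finite ?S"
    using poly_roots_finite[OF \<open>p \<noteq> 0\<close>] by (rule finite_subset[rotated]) auto
  show ?case
  proof (cases "?S = {}")
    case True
    have "poly p x \<noteq> 0" if "a \<le> x" "x \<le> b" for x
      using that less.prems True by (cases "x = a \<or> x = b") (auto simp: order_le_less)
    then have "sgn (poly p a) = sgn (poly p b)"
      using less.prems by (intro sgn_poly_eq_if_no_roots) auto
    then show ?thesis
      unfolding True by simp
  next
    case False
    define w where "w = Min ?S"
    have w: "w \<in> ?S"
      unfolding w_def using fin False by (rule Min_in)
    have w_min: "\<And>y. y \<in> ?S \<Longrightarrow> w \<le> y"
      unfolding w_def using fin by (rule Min_le)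
    obtain c where "w < c" "c < b" and c: "\<And>x. w < x \<Longrightarrow> x \<le> c \<Longrightarrow> poly p x \<noteq> 0"
      using poly_no_roots_right[OF \<open>p \<noteq> 0\<close>] w by blast
    have left: "sgn_left p w = sgn (poly p a)"
    proof (rule sgn_left_eq_sgn_poly)
      show "a < w"
        using w by simp
      show "poly p x \<noteq> 0" if "a \<le> x" "x < w" for x
        using that w w_min[of x] less.prems(2) by (cases "x = a") (auto simp: order_le_less)
    qed
    have right: "sgn_right p w = sgn (poly p c)"
      using \<open>w < c\<close> c by (rule sgn_right_eq_sgn_poly)
    have rest: "{y. poly p y = 0 \<and> c < y \<and> y < b} = ?S - {w}"
    proof (intro equalityI subsetI)
      fix y
      assume "y \<in> {y. poly p y = 0 \<and> c < y \<and> y < b}"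
      then show "y \<in> ?S - {w}"
        using w \<open>w < c\<close> by auto
    next
      fix y
      assume y: "y \<in> ?S - {w}"
      then have "w < y"
        using w_min[of y] by auto
      with y c[of y] have "c < y"
        by force
      with y show "y \<in> {y. poly p y = 0 \<and> c < y \<and> y < b}"
        by auto
    qed
    have "card (?S - {w}) < card ?S"
      using fin w by (rule card_Diff1_less)
    moreover have "poly p c \<noteq> 0"
      using c[of c] \<open>w < c\<close> by simp
    ultimately have "(\<Sum>y\<in>?S - {w}. sgn_right p y - sgn_left p y) = sgn (poly p b) - sgn (poly p c)"
      using less.hyps[of c, unfolded rest] \<open>c < b\<close> less.prems(3) by blast
    then show ?thesis
      by (simp add: sum.remove[OF fin w] left right)
  qed
qed

lemma eventually_sgn_poly_at_top:
  fixes p :: "real poly"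
  assumes "p \<noteq> 0"
  shows "\<forall>\<^sub>F x in at_top. sgn (poly p x) = sgn (lead_coeff p)"
proof -
  have pos: "\<forall>\<^sub>F x in at_top. poly q x > 0" if "lead_coeff q > 0" for q :: "real poly"
    using poly_pinfty_gt_lc[OF that] that
    by (auto simp: eventually_at_top_linorder intro: less_le_trans)
  consider "lead_coeff p > 0" | "lead_coeff (- p) > 0"
    using assms by (force simp: lead_coeff_minus)
  then show ?thesis
  proof cases
    case 1
    from pos[OF 1] show ?thesis
      by eventually_elim (use 1 in simp)
  next
    case 2
    from pos[OF 2] show ?thesis
      by eventually_elim (use 2 in \<open>simp add: lead_coeff_minus\<close>)
  qed
qed

lemma eventually_sgn_poly_at_bot:
  fixes p :: "real poly"
  assumes "p \<noteq> 0"
  shows "\<forall>\<^sub>F x in at_bot. sgn (poly p x) = (-1) ^ degree p * sgn (lead_coeff p)"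
proof -
  define r where "r = p \<circ>\<^sub>p [:0, -1:]"
  have r: "poly r x = poly p (- x)" for x
    by (simp add: r_def poly_pcompose)
  have lc: "lead_coeff r = (-1) ^ degree p * lead_coeff p"
    unfolding r_def by (subst lead_coeff_comp) auto
  then have "r \<noteq> 0"
    using assms by auto
  from eventually_sgn_poly_at_top[OF this] show ?thesis
    unfolding at_bot_mirror eventually_filtermap
    by eventually_elim (simp add: r lc sgn_mult power_sgn)
qed

lemma sum_sign_jumps:
  fixes p :: "real poly"
  assumes "p \<noteq> 0"
  shows "(\<Sum>w\<in>{w. poly p w = 0}. sgn_right p w - sgn_left p w)
    = sgn (lead_coeff p) - (-1) ^ degree p * sgn (lead_coeff p)"
proof -
  let ?Z = "{w. poly p w = 0}"
  have fin: "finite ?Z"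
    using poly_roots_finite[OF assms] .
  have "\<forall>\<^sub>F x in at_top. (\<forall>z\<in>?Z. z < x) \<and> 0 < x \<and> sgn (poly p x) = sgn (lead_coeff p)"
    using fin eventually_sgn_poly_at_top[OF assms]
    by (intro eventually_conj eventually_ball_finite) (auto simp: eventually_gt_at_top)
  then obtain b where b: "\<forall>z\<in>?Z. z < b" "0 < b" "sgn (poly p b) = sgn (lead_coeff p)"
    by (auto dest: eventually_happens'[OF trivial_limit_at_top_linorder])
  have "\<forall>\<^sub>F x in at_bot. (\<forall>z\<in>?Z. x < z) \<and> x < 0
      \<and> sgn (poly p x) = (-1) ^ degree p * sgn (lead_coeff p)"
    using fin eventually_sgn_poly_at_bot[OF assms]
    by (intro eventually_conj eventually_ball_finite) (auto simp: eventually_gt_at_bot)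
  then obtain a where a: "\<forall>z\<in>?Z. a < z" "a < 0"
      "sgn (poly p a) = (-1) ^ degree p * sgn (lead_coeff p)"
    by (auto dest: eventually_happens'[OF trivial_limit_at_bot_linorder])
  have "{w. poly p w = 0 \<and> a < w \<and> w < b} = ?Z"
    using a(1) b(1) by auto
  moreover have "poly p a \<noteq> 0" "poly p b \<noteq> 0"
    using a(1) b(1) by auto
  ultimately show ?thesis
    using sum_sign_jumps_between[of a b p] a b by simp
qed

lemma sgn_ratfun: "sgn (ratfun f1 f0 x) = sgn (poly (f1 * f0) x)"
  by (simp add: ratfun_def sgn_mult sgn_divide)

lemma sign_change_index:
  fixes g :: "'a \<Rightarrow> real"
  assumes "F \<noteq> bot" "G \<noteq> bot"
    and "\<forall>\<^sub>F x in F. sgn (g x) = l" "\<forall>\<^sub>F x in G. sgn (g x) = r"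
    and "l = 1 \<or> l = -1" "r = 1 \<or> r = -1"
  shows "real_of_int
      (if (\<forall>\<^sub>F x in F. g x < 0) \<and> (\<forall>\<^sub>F x in G. g x > 0) then 1
       else if (\<forall>\<^sub>F x in F. g x > 0) \<and> (\<forall>\<^sub>F x in G. g x < 0) then -1 else 0)
    = (r - l) / 2"
proof -
  have neg: "(\<forall>\<^sub>F x in H. g x < 0) \<longleftrightarrow> (\<forall>\<^sub>F x in H. sgn (g x) = -1)"
    and pos: "(\<forall>\<^sub>F x in H. g x > 0) \<longleftrightarrow> (\<forall>\<^sub>F x in H. sgn (g x) = 1)" for H
    by (intro eventually_subst always_eventually; auto simp: sgn_if)+
  show ?thesis
    using assms(5,6)
    unfolding neg pos eventually_sgn_eq_iff[OF assms(1,3)] eventually_sgn_eq_iff[OF assms(2,4)]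
    by auto
qed

lemma jump_at_eq_sign_change:
  assumes "f1 \<noteq> 0" "f0 \<noteq> 0"
  shows "real_of_int (jump_at f1 f0 w) =
    (if pole_order f1 f0 w > 0 \<and> odd (pole_order f1 f0 w)
     then (sgn_right (f1 * f0) w - sgn_left (f1 * f0) w) / 2 else 0)"
proof -
  have p: "f1 * f0 \<noteq> 0"
    using assms by simp
  have "real_of_int
      (if (\<forall>\<^sub>F x in at_left w. ratfun f1 f0 x < 0) \<and> (\<forall>\<^sub>F x in at_right w. ratfun f1 f0 x > 0) then 1
       else if (\<forall>\<^sub>F x in at_left w. ratfun f1 f0 x > 0) \<and> (\<forall>\<^sub>F x in at_right w. ratfun f1 f0 x < 0)
       then -1 else 0)
    = (sgn_right (f1 * f0) w - sgn_left (f1 * f0) w) / 2"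
    using eventually_sgn_poly_at_left[OF p] eventually_sgn_poly_at_right[OF p]
      sgn_left_cases[OF p] sgn_right_cases[OF p]
    by (intro sign_change_index trivial_limit_at_left_real trivial_limit_at_right_real)
      (simp_all add: sgn_ratfun)
  then show ?thesis
    by (simp add: jump_at_def)
qed

lemma ind_inf_eq_sign_change:
  assumes "f1 \<noteq> 0" "f0 \<noteq> 0"
  shows "real_of_int (ind_inf f1 f0) =
    (let k = int (degree f1) - int (degree f0) in
     if k > 0 \<and> odd k then
       ((-1) ^ degree (f1 * f0) * sgn (lead_coeff (f1 * f0)) - sgn (lead_coeff (f1 * f0))) / 2
     else 0)"
proof -
  have p: "f1 * f0 \<noteq> 0"
    using assms by simp
  define s where "s = sgn (lead_coeff (f1 * f0))"
  have s: "s = 1 \<or> s = -1"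
    using p by (auto simp: s_def sgn_if)
  then have s': "(-1) ^ degree (f1 * f0) * s = 1 \<or> (-1) ^ degree (f1 * f0) * s = -1"
    by (auto simp: minus_one_power_iff)
  have "real_of_int
      (if (\<forall>\<^sub>F x in at_top. ratfun f1 f0 x < 0) \<and> (\<forall>\<^sub>F x in at_bot. ratfun f1 f0 x > 0) then 1
       else if (\<forall>\<^sub>F x in at_top. ratfun f1 f0 x > 0) \<and> (\<forall>\<^sub>F x in at_bot. ratfun f1 f0 x < 0)
       then -1 else 0)
    = ((-1) ^ degree (f1 * f0) * s - s) / 2"
    using eventually_sgn_poly_at_top[OF p] eventually_sgn_poly_at_bot[OF p] s s'
    unfolding s_def[symmetric]
    by (intro sign_change_index trivial_limit_at_top_linorder trivial_limit_at_bot_linorder)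
      (simp_all add: sgn_ratfun)
  then show ?thesis
    by (simp add: ind_inf_def Let_def s_def)
qed

lemma jump_at_neg_inverse:
  assumes "f1 \<noteq> 0" "f0 \<noteq> 0"
  shows "real_of_int (jump_at f1 f0 w) - real_of_int (jump_at (- f0) f1 w)
    = (sgn_right (f1 * f0) w - sgn_left (f1 * f0) w) / 2"
proof -
  define p where "p = f1 * f0"
  define d where "d = pole_order f1 f0 w"
  have "pole_order (- f0) f1 w = - d"
    by (simp add: pole_order_def d_def)
  moreover have "(- f0) * f1 = - p"
    by (simp add: p_def)
  moreover have "order w p = order w f1 + order w f0"
    using assms by (simp add: p_def order_mult)
  then have "even d \<Longrightarrow> sgn_left p w = sgn_right p w"
    by (simp add: sgn_left_def d_def pole_order_def even_diff)
  ultimately show ?thesis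
    using jump_at_eq_sign_change[OF assms, of w] jump_at_eq_sign_change[of "- f0" f1 w] assms
    unfolding p_def[symmetric] d_def[symmetric]
    by (auto simp: sgn_right_uminus sgn_left_uminus field_simps)
qed

lemma ind_inf_neg_inverse:
  assumes "f1 \<noteq> 0" "f0 \<noteq> 0"
  shows "real_of_int (ind_inf f1 f0) - real_of_int (ind_inf (- f0) f1)
    = ((-1) ^ degree (f1 * f0) * sgn (lead_coeff (f1 * f0)) - sgn (lead_coeff (f1 * f0))) / 2"
proof -
  define p where "p = f1 * f0"
  have "degree p = degree f1 + degree f0"
    using assms by (simp add: p_def degree_mult_eq)
  moreover have "(- f0) * f1 = - p"
    by (simp add: p_def)
  ultimately show ?thesis
    using ind_inf_eq_sign_change[OF assms] ind_inf_eq_sign_change[of "- f0" f1] assms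
    unfolding p_def[symmetric]
    by (auto simp: Let_def lead_coeff_minus sgn_minus even_diff)
qed

lemma ind_real_eq_sum:
  assumes "finite A" "{w. poly f0 w = 0} \<subseteq> A"
  shows "ind_real f1 f0 = (\<Sum>w\<in>A. jump_at f1 f0 w)"
  unfolding ind_real_def
  using assms by (intro sum.mono_neutral_left) (auto simp: jump_at_def pole_order_def order_0I)

lemma ind_real_neg_inverse:
  assumes "f1 \<noteq> 0" "f0 \<noteq> 0"
  shows "real_of_int (ind_real f1 f0) - real_of_int (ind_real (- f0) f1)
    = (sgn (lead_coeff (f1 * f0)) - (-1) ^ degree (f1 * f0) * sgn (lead_coeff (f1 * f0))) / 2"
proof -
  let ?Z = "{w. poly (f1 * f0) w = 0}"
  have fin: "finite ?Z"
    using assms by (intro poly_roots_finite) simp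
  have "real_of_int (ind_real f1 f0) - real_of_int (ind_real (- f0) f1)
      = (\<Sum>w\<in>?Z. real_of_int (jump_at f1 f0 w) - real_of_int (jump_at (- f0) f1 w))"
    using ind_real_eq_sum[OF fin, of f0 f1] ind_real_eq_sum[OF fin, of f1 "- f0"]
    by (simp add: subset_iff sum_subtractf of_int_sum)
  also have "\<dots> = (\<Sum>w\<in>?Z. sgn_right (f1 * f0) w - sgn_left (f1 * f0) w) / 2"
    by (simp add: jump_at_neg_inverse[OF assms] sum_divide_distrib)
  also have "\<dots> = (sgn (lead_coeff (f1 * f0)) - (-1) ^ degree (f1 * f0) * sgn (lead_coeff (f1 * f0))) / 2"
    using sum_sign_jumps[of "f1 * f0"] assms by simp
  finally show ?thesis .
qed

theorem lemma55:
  fixes f1 f0 :: "real poly"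
  assumes "f0 \<noteq> 0" and "f1 \<noteq> 0"
  shows "ind_PR (- f0) f1 = ind_PR f1 f0"
proof -
  have "real_of_int (ind_PR f1 f0) - real_of_int (ind_PR (- f0) f1) = 0"
    using ind_real_neg_inverse[OF assms(2,1)] ind_inf_neg_inverse[OF assms(2,1)]
    by (simp add: ind_PR_def field_simps)
  then show ?thesis
    by simp
qed

end
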